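(* On the probability space $((0,1),\mathcal{B},\mathcal{L})$ ($\mathcal{B}$ the Borel $\sigma$-algebra, $\mathcal{L}$ Lebesgue measure), the digit sequence $\{d_n\}_{n\ge1}$ of the signed Engel expansion (defined on the irrationals, a set of full measure) is a time-homogeneous Markov chain with initial distribution $$\mathcal{L}(d_1=2k)=\frac{2}{(2k-1)(2k+1)},\qquad k\in\mathbb{N},$$ and one-step transition probabilities, for $k,l\in\mathbb{N}$ with $l\ge k$, $$\mathcal{L}(d_{n+1}=2l\mid d_n=2k)=\begin{cases}\frac{1}{2k},& l=k,\\ \frac{(2k-1)(2k+1)}{k(2l-1)(2l+1)},& l\ge k+1.\end{cases}$$
   Context: Define $T\colon[0,1)\to[0,1)$ by: for $k\in\mathbb{N}$, $Tx=\lceil 1/x\rceil x-1$ if $x\in(\frac{1}{2k},\frac{1}{2k-1})$; $Tx=1-\lfloor 1/x\rfloor x$ if $x\in(\frac{1}{2k+1},\frac{1}{2k})$; $Tx=0$ if $x\in\{0\}\cup\{1/n\colon n\ge 2\}$. For $x\in(0,1)$, $d_1(x)=\lceil 1/x\rceil$ if $x\in[\frac{1}{2k},\frac{1}{2k-1})$ for some $k\in\mathbb{N}$, and $d_1(x)=\lfloor 1/x\rfloor$ if $x\in[\frac{1}{2k+1},\frac{1}{2k})$ for some $k\in\mathbb{N}$; $d_{n+1}(x)=d_1(T^nx)$. For irrational $x$ all $d_n(x)$ are even positive integers. *)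

theory Defs
  imports "HOL-Analysis.Analysis"
begin

definition sed_T :: "real \<Rightarrow> real" where
  "sed_T x =
    (if \<exists>k::nat. k \<ge> 1 \<and> 1 / (2 * real k) < x \<and> x < 1 / (2 * real k - 1)
     then real_of_int (ceiling (1 / x)) * x - 1
     else if \<exists>k::nat. k \<ge> 1 \<and> 1 / (2 * real k + 1) < x \<and> x < 1 / (2 * real k)
     then 1 - real_of_int (floor (1 / x)) * x
     else 0)"

definition sed_d1 :: "real \<Rightarrow> nat" where
  "sed_d1 x =
    (if \<exists>k::nat. k \<ge> 1 \<and> 1 / (2 * real k) \<le> x \<and> x < 1 / (2 * real k - 1)
     then nat (ceiling (1 / x))
     else if \<exists>k::nat. k \<ge> 1 \<and> 1 / (2 * real k + 1) \<le> x \<and> x < 1 / (2 * real k)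
     then nat (floor (1 / x))
     else 0)"

definition sed_digit :: "nat \<Rightarrow> real \<Rightarrow> nat" where
  "sed_digit n x = sed_d1 ((sed_T ^^ (n - 1)) x)"

definition sed_space :: "real measure" where
  "sed_space = restrict_space lborel {0<..<1}"

definition sed_trans :: "nat \<Rightarrow> nat \<Rightarrow> real" where
  "sed_trans k l =
    (if l = k then 1 / (2 * real k)
     else if l \<ge> k + 1 then (2 * real k - 1) * (2 * real k + 1)
                              / (real k * (2 * real l - 1) * (2 * real l + 1))
     else 0)"

end

theory Submission
  imports Defs
begin

text \<open>
  On \<open>D\<^sub>k = (1/(2k+1), 1/(2k-1))\<close>, the set where \<open>d\<^sub>1 = 2k\<close>, the map \<open>T\<close> is the tent map
  \<open>y \<mapsto> |2ky - 1|\<close>. So if the distribution function \<open>G\<close> of a variable \<open>f\<close> on an event \<open>A\<close>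
  is affine with slope \<open>\<sigma>\<close> on \<open>D\<^sub>k\<close>, then on \<open>{x \<in> A. d\<^sub>1 (f x) = 2k}\<close> the distribution
  function of \<open>T \<circ> f\<close> is \<open>\<sigma>/(2k) \<cdot> h\<^sub>k\<close>, where \<open>h\<^sub>k t = min t (1/(2k-1)) + min t (1/(2k+1))\<close>.
  Since \<open>h\<^sub>a\<close> is affine on every \<open>D\<^sub>k\<close>, with slope 0, 1 or 2 according as \<open>k < a\<close>, \<open>k = a\<close>
  or \<open>k > a\<close>, induction on \<open>n\<close> shows that on every cylinder
  \<open>{d\<^sub>1 = 2a\<^sub>1, \<dots>, d\<^sub>n = 2a\<^sub>n}\<close> the distribution function of \<open>T\<^sup>n\<close> is a multiple of
  \<open>h\<^bsub>a\<^sub>n\<^esub>\<close>; the same holds on \<open>{d\<^sub>n = 2k}\<close> with \<open>h\<^sub>k\<close>, because digits never decrease and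
  so this event is a finite disjoint union of pieces of the previous level. Conditional
  probabilities of the next digit are then ratios of values of these functions at 1, in which
  the multiples cancel and only the last digit survives.
\<close>

lemma ceiling_one_div_eq_iff:
  fixes y :: real and m :: int
  assumes "0 < y" "1 < m"
  shows "\<lceil>1 / y\<rceil> = m \<longleftrightarrow> 1 / m \<le> y \<and> y < 1 / (m - 1)"
  using assms by (auto simp: ceiling_eq_iff field_simps)

lemma abs_mult_sub_one_less:
  fixes p y :: real
  assumes p: "1 < p" and y: "1 / (p + 1) < y" "y < 1 / (p - 1)"
  shows "\<bar>p * y - 1\<bar> < 1 / (p - 1)"
proof -
  have "y * (p - 1) < 1" "1 < y * (p + 1)" using p y by (simp_all add: field_simps)
  then have "p * (y * (p - 1)) < p" "p < p * (y * (p + 1))" using p by simp_all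
  then have "p * y - 1 < 1 / (p - 1)" "1 - p * y < 1 / (p + 1)"
    using p by (simp_all add: field_simps)
  moreover have "1 / (p + 1) < 1 / (p - 1)" using p by (simp add: frac_less2)
  ultimately show ?thesis by linarith
qed

lemma abs_mult_sub_one_less_iff:
  fixes p y t :: real
  assumes p: "1 < p"
  shows "1 / (p + 1) < y \<and> y < 1 / (p - 1) \<and> \<bar>p * y - 1\<bar> < t \<longleftrightarrow>
    (1 - min t (1 / (p + 1))) / p < y \<and> y < (1 + min t (1 / (p - 1))) / p"
proof -
  have "0 < p" "0 < p - 1" "0 < p + 1" using p by simp_all
  then have "1 / (p + 1) = (1 - 1 / (p + 1)) / p" "1 / (p - 1) = (1 + 1 / (p - 1)) / p"
    by (simp_all add: divide_simps)
  moreover have "\<bar>p * y - 1\<bar> < t \<longleftrightarrow> (1 - t) / p < y \<and> y < (1 + t) / p"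
    using \<open>0 < p\<close> by (auto simp: abs_less_iff field_simps)
  moreover have "(1 - min t c) / p = max ((1 - t) / p) ((1 - c) / p)"
    "(1 + min t c) / p = min ((1 + t) / p) ((1 + c) / p)" for c
    using \<open>0 < p\<close> by (simp_all add: min_def max_def divide_simps)
  ultimately show ?thesis by (smt (verit))
qed

lemma abs_mult_sub_one_preimage_bounds:
  fixes p t :: real
  assumes p: "1 < p" and t: "0 \<le> t"
  shows "1 / (p + 1) \<le> (1 - min t (1 / (p + 1))) / p"
    and "(1 - min t (1 / (p + 1))) / p \<le> (1 + min t (1 / (p - 1))) / p"
    and "(1 + min t (1 / (p - 1))) / p \<le> 1 / (p - 1)"
proof -
  have m: "0 \<le> min t (1 / (p + 1))" "min t (1 / (p + 1)) \<le> 1 / (p + 1)"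
    "0 \<le> min t (1 / (p - 1))" "min t (1 / (p - 1)) \<le> 1 / (p - 1)"
    using t p by auto
  have "1 / (p + 1) = (1 - 1 / (p + 1)) / p" "1 / (p - 1) = (1 + 1 / (p - 1)) / p"
    using p by (simp_all add: divide_simps)
  moreover have "(1 - 1 / (p + 1)) / p \<le> (1 - min t (1 / (p + 1))) / p"
    "(1 - min t (1 / (p + 1))) / p \<le> 1 / p" "1 / p \<le> (1 + min t (1 / (p - 1))) / p"
    "(1 + min t (1 / (p - 1))) / p \<le> (1 + 1 / (p - 1)) / p"
    using m p by (auto intro: divide_right_mono)
  ultimately show "1 / (p + 1) \<le> (1 - min t (1 / (p + 1))) / p"
    and "(1 - min t (1 / (p + 1))) / p \<le> (1 + min t (1 / (p - 1))) / p"
    and "(1 + min t (1 / (p - 1))) / p \<le> 1 / (p - 1)"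
    by linarith+
qed

lemma abs_mult_sub_one_eq_imp:
  fixes p y v :: real
  assumes "0 < p" "\<bar>p * y - 1\<bar> = v"
  shows "y = (1 - v) / p \<or> y = (1 + v) / p"
proof -
  have "p * y = 1 - v \<or> p * y = 1 + v" using assms(2) by linarith
  moreover have "y = (p * y) / p" using assms(1) by simp
  ultimately show ?thesis by metis
qed

lemma sed_d1_eq_ceiling:
  assumes y: "0 < y"
  shows "sed_d1 y = (if \<exists>j::nat. j \<ge> 1 \<and> \<lceil>1 / y\<rceil> = 2 * int j then nat \<lceil>1 / y\<rceil>
    else if \<exists>j::nat. j \<ge> 1 \<and> \<lceil>1 / y\<rceil> = 2 * int j + 1 then nat \<lfloor>1 / y\<rfloor> else 0)"
proof -
  have even: "1 / (2 * real j) \<le> y \<and> y < 1 / (2 * real j - 1) \<longleftrightarrow> \<lceil>1 / y\<rceil> = 2 * int j"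
    if "j \<ge> 1" for j :: nat
    using ceiling_one_div_eq_iff[OF y, of "2 * int j"] that by simp
  have odd: "1 / (2 * real j + 1) \<le> y \<and> y < 1 / (2 * real j) \<longleftrightarrow> \<lceil>1 / y\<rceil> = 2 * int j + 1"
    if "j \<ge> 1" for j :: nat
    using ceiling_one_div_eq_iff[OF y, of "2 * int j + 1"] that by simp
  have "(\<exists>j::nat. j \<ge> 1 \<and> 1 / (2 * real j) \<le> y \<and> y < 1 / (2 * real j - 1))
      \<longleftrightarrow> (\<exists>j::nat. j \<ge> 1 \<and> \<lceil>1 / y\<rceil> = 2 * int j)"
    using even by blast
  moreover have "(\<exists>j::nat. j \<ge> 1 \<and> 1 / (2 * real j + 1) \<le> y \<and> y < 1 / (2 * real j))
      \<longleftrightarrow> (\<exists>j::nat. j \<ge> 1 \<and> \<lceil>1 / y\<rceil> = 2 * int j + 1)"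
    using odd by blast
  ultimately show ?thesis unfolding sed_d1_def by presburger
qed

text \<open>The interval is open on the left: at \<open>1/(2k+1)\<close> the floor branch of \<open>sed_d1\<close> gives \<open>2k+1\<close>.\<close>

lemma sed_d1_eq_even_iff:
  assumes k: "k \<ge> 1"
  shows "sed_d1 y = 2 * k \<longleftrightarrow> 1 / (2 * real k + 1) < y \<and> y < 1 / (2 * real k - 1)"
proof (cases "0 < y")
  case False
  have "0 < 1 / (2 * real j + 1)" "0 < 1 / (2 * real j)" if "j \<ge> 1" for j :: nat
    using that by simp_all
  then have "sed_d1 y = 0" "\<not> 1 / (2 * real k + 1) < y"
    using False k unfolding sed_d1_def by (smt (verit))+
  then show ?thesis using k by simp
next
  case True
  define z where "z = 1 / y"
  have "\<lceil>z\<rceil> = 2 * int k \<longleftrightarrow> 2 * real k - 1 < z \<and> z \<le> 2 * real k"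
    by (simp add: ceiling_eq_iff)
  moreover have "\<lceil>z\<rceil> = 2 * int k + 1 \<and> \<lfloor>z\<rfloor> = 2 * int k \<longleftrightarrow> 2 * real k < z \<and> z < 2 * real k + 1"
    by (auto simp: ceiling_eq_iff floor_eq_iff)
  moreover have "\<lfloor>z\<rfloor> = \<lceil>z\<rceil> \<or> \<lfloor>z\<rfloor> = \<lceil>z\<rceil> - 1"
    using ceiling_diff_floor_le_1[of z] floor_le_ceiling[of z] by linarith
  ultimately have "sed_d1 y = 2 * k \<longleftrightarrow> 2 * real k - 1 < z \<and> z < 2 * real k + 1"
    using k unfolding sed_d1_eq_ceiling[OF True] z_def[symmetric] by auto presburger+
  also have "\<dots> \<longleftrightarrow> 1 / (2 * real k + 1) < y \<and> y < 1 / (2 * real k - 1)"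
    using True k by (auto simp: z_def field_simps)
  finally show ?thesis .
qed

lemma sed_T_eq_inverse:
  fixes y :: real
  assumes y: "0 < y"
  shows "sed_T y =
    (if \<exists>j::nat. j \<ge> 1 \<and> 2 * real j - 1 < 1 / y \<and> 1 / y < 2 * real j
     then real_of_int \<lceil>1 / y\<rceil> * y - 1
     else if \<exists>j::nat. j \<ge> 1 \<and> 2 * real j < 1 / y \<and> 1 / y < 2 * real j + 1
     then 1 - real_of_int \<lfloor>1 / y\<rfloor> * y
     else 0)"
proof -
  have even: "1 / (2 * real j) < y \<and> y < 1 / (2 * real j - 1)
      \<longleftrightarrow> 2 * real j - 1 < 1 / y \<and> 1 / y < 2 * real j"
    if "j \<ge> 1" for j :: nat
    using y that by (auto simp: field_simps)
  have odd: "1 / (2 * real j + 1) < y \<and> y < 1 / (2 * real j)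
      \<longleftrightarrow> 2 * real j < 1 / y \<and> 1 / y < 2 * real j + 1"
    if "j \<ge> 1" for j :: nat
    using y that by (auto simp: field_simps)
  have "(\<exists>j::nat. j \<ge> 1 \<and> 1 / (2 * real j) < y \<and> y < 1 / (2 * real j - 1))
      \<longleftrightarrow> (\<exists>j::nat. j \<ge> 1 \<and> 2 * real j - 1 < 1 / y \<and> 1 / y < 2 * real j)"
    using even by blast
  moreover have "(\<exists>j::nat. j \<ge> 1 \<and> 1 / (2 * real j + 1) < y \<and> y < 1 / (2 * real j))
      \<longleftrightarrow> (\<exists>j::nat. j \<ge> 1 \<and> 2 * real j < 1 / y \<and> 1 / y < 2 * real j + 1)"
    using odd by blast
  ultimately show ?thesis unfolding sed_T_def by presburger
qed

lemma sed_T_eq_on_digit_interval: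
  assumes k: "k \<ge> 1" and y: "1 / (2 * real k + 1) < y" "y < 1 / (2 * real k - 1)"
  shows "sed_T y = \<bar>2 * real k * y - 1\<bar>"
proof -
  have "0 < 1 / (2 * real k + 1)" by simp
  with y have pos: "0 < y" by linarith
  define z where "z = 1 / y"
  have T_eq: "sed_T y =
    (if \<exists>j::nat. j \<ge> 1 \<and> 2 * real j - 1 < z \<and> z < 2 * real j
     then real_of_int \<lceil>z\<rceil> * y - 1
     else if \<exists>j::nat. j \<ge> 1 \<and> 2 * real j < z \<and> z < 2 * real j + 1
     then 1 - real_of_int \<lfloor>z\<rfloor> * y
     else 0)"
    unfolding z_def by (rule sed_T_eq_inverse[OF pos])
  have z: "2 * real k - 1 < z" "z < 2 * real k + 1"
    using pos k y by (auto simp: z_def field_simps)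
  have zy: "z * y = 1" using pos by (simp add: z_def)
  consider "z < 2 * real k" | "z = 2 * real k" | "2 * real k < z" by linarith
  then show ?thesis
  proof cases
    case 1
    then have "\<lceil>z\<rceil> = 2 * int k" using z by (simp add: ceiling_eq_iff)
    moreover have "1 < 2 * real k * y" using 1 pos zy by (smt (verit) mult_strict_right_mono)
    ultimately show ?thesis using T_eq 1 z k by auto
  next
    case 2
    have "\<not> (2 * real j - 1 < z \<and> z < 2 * real j)" "\<not> (2 * real j < z \<and> z < 2 * real j + 1)"
      for j :: nat
    proof -
      have "real j \<le> real k \<or> real k + 1 \<le> real j" by (cases "j \<le> k") auto
      then show "\<not> (2 * real j - 1 < z \<and> z < 2 * real j)" "\<not> (2 * real j < z \<and> z < 2 * real j + 1)"
        unfolding 2 by auto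
    qed
    then show ?thesis using T_eq 2 zy by simp
  next
    case 3
    have "\<not> (2 * real j - 1 < z \<and> z < 2 * real j)" for j :: nat
    proof
      assume "2 * real j - 1 < z \<and> z < 2 * real j"
      then have "k < j" "j < k + 1" using 3 z by linarith+
      then show False by linarith
    qed
    moreover have "\<lfloor>z\<rfloor> = 2 * int k" using 3 z by (simp add: floor_eq_iff)
    moreover have "2 * real k * y < 1" using 3 pos zy by (smt (verit) mult_strict_right_mono)
    ultimately show ?thesis using T_eq 3 z k by auto
  qed
qed

lemma sed_T_less_on_digit_interval:
  assumes k: "k \<ge> 1" and y: "1 / (2 * real k + 1) < y" "y < 1 / (2 * real k - 1)"
  shows "sed_T y < 1 / (2 * real k - 1)"
  using sed_T_eq_on_digit_interval[OF k y] abs_mult_sub_one_less[of "2 * real k" y] k y by simp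

lemma sed_T_nonzero_imp:
  assumes "sed_T y \<noteq> 0"
  obtains j :: nat where "j \<ge> 1" "1 / (2 * real j + 1) < y" "y < 1 / (2 * real j - 1)"
proof -
  have "1 / (2 * real j + 1) < 1 / (2 * real j)" "1 / (2 * real j) < 1 / (2 * real j - 1)"
    if "j \<ge> 1" for j :: nat
    using that by (simp_all add: frac_less2)
  then show ?thesis using assms that unfolding sed_T_def by (smt (verit))
qed

lemma sed_T_less_one: "sed_T y < 1"
proof (cases "sed_T y = 0")
  case False
  then obtain j :: nat where j: "j \<ge> 1" "1 / (2 * real j + 1) < y" "y < 1 / (2 * real j - 1)"
    by (rule sed_T_nonzero_imp)
  have "1 / (2 * real j - 1) \<le> 1" using j(1) by simp
  with sed_T_less_on_digit_interval[OF j] show ?thesis by linarith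
qed simp

lemma sed_d1_sed_T_imp:
  assumes k: "k \<ge> 1" and d: "sed_d1 (sed_T y) = 2 * k"
  shows "\<exists>j\<in>{1..k}. sed_d1 y = 2 * j"
proof -
  have Ty: "1 / (2 * real k + 1) < sed_T y" using sed_d1_eq_even_iff[OF k] d by blast
  moreover have "0 < 1 / (2 * real k + 1)" by simp
  ultimately have "sed_T y \<noteq> 0" by linarith
  then obtain j :: nat where j: "j \<ge> 1" "1 / (2 * real j + 1) < y" "y < 1 / (2 * real j - 1)"
    by (rule sed_T_nonzero_imp)
  with Ty sed_T_less_on_digit_interval[OF j]
  have "1 / (2 * real k + 1) < 1 / (2 * real j - 1)" by linarith
  then have "2 * real j - 1 < 2 * real k + 1" using j by (simp add: field_simps)
  then have "j \<le> k" by linarith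
  moreover have "sed_d1 y = 2 * j" using j sed_d1_eq_even_iff[OF j(1)] by blast
  ultimately show ?thesis using j(1) by auto
qed

lemma sed_d1_sed_T_less_iff:
  assumes k: "k \<ge> 1"
  shows "sed_d1 y = 2 * k \<and> sed_T y < t \<longleftrightarrow>
    (1 - min t (1 / (2 * real k + 1))) / (2 * real k) < y \<and>
    y < (1 + min t (1 / (2 * real k - 1))) / (2 * real k)"
  using abs_mult_sub_one_less_iff[of "2 * real k" y t] sed_d1_eq_even_iff[OF k]
    sed_T_eq_on_digit_interval[OF k] k
  by auto

lemma sed_d1_sed_T_eq_imp:
  assumes k: "k \<ge> 1" and d: "sed_d1 y = 2 * k"
  shows "y = (1 - sed_T y) / (2 * real k) \<or> y = (1 + sed_T y) / (2 * real k)"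
  using abs_mult_sub_one_eq_imp[of "2 * real k" y] sed_T_eq_on_digit_interval[OF k]
    sed_d1_eq_even_iff[OF k] d k
  by auto

lemma sed_T_measurable [measurable]: "sed_T \<in> borel_measurable borel"
  unfolding sed_T_def[abs_def] by measurable

lemma sed_d1_measurable [measurable]: "sed_d1 \<in> borel \<rightarrow>\<^sub>M count_space UNIV"
  unfolding sed_d1_def[abs_def] by measurable

lemma sed_digit_Suc: "sed_digit (Suc n) x = sed_d1 ((sed_T ^^ n) x)"
  by (simp add: sed_digit_def)

lemma space_sed_space [simp]: "space sed_space = {0<..<1}"
  by (simp add: sed_space_def space_restrict_space)

lemma measurable_sed_spaceI: "g \<in> borel \<rightarrow>\<^sub>M N \<Longrightarrow> g \<in> sed_space \<rightarrow>\<^sub>M N"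
  unfolding sed_space_def by (rule measurable_restrict_space1) simp

lemma measure_sed_space: "S \<subseteq> {0<..<1} \<Longrightarrow> measure sed_space S = measure lborel S"
  unfolding sed_space_def by (rule measure_restrict_space) auto

lemma finite_measure_sed_space: "finite_measure sed_space"
  by (rule finite_measureI) (simp add: sed_space_def emeasure_restrict_space)

lemma sed_digit_measurable: "sed_digit n \<in> sed_space \<rightarrow>\<^sub>M count_space UNIV"
  unfolding sed_digit_def[abs_def] by (intro measurable_sed_spaceI) measurable

text \<open>\<open>G\<close> is not normalised: \<open>G 1\<close> is the measure of \<open>A\<close>.\<close>

definition has_cdf_on :: "'a measure \<Rightarrow> 'a set \<Rightarrow> ('a \<Rightarrow> real) \<Rightarrow> (real \<Rightarrow> real) \<Rightarrow> bool" where
  "has_cdf_on M A f G \<longleftrightarrow>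
    A \<in> sets M \<and> f \<in> borel_measurable M \<and> (\<forall>x\<in>A. f x < 1) \<and>
    (\<forall>v. measure M {x\<in>A. f x = v} = 0) \<and> (\<forall>v\<in>{0..1}. measure M {x\<in>A. f x < v} = G v)"

lemma sets_Collect_restrict:
  assumes "A \<in> sets M" "Measurable.pred M P"
  shows "{x\<in>A. P x} \<in> sets M"
proof -
  have "{x\<in>A. P x} = A \<inter> {x\<in>space M. P x}" using sets.sets_into_space[OF assms(1)] by auto
  then show ?thesis using assms by auto
qed

context finite_measure
begin

lemma has_cdf_on_measure:
  assumes "has_cdf_on M A f G"
  shows "measure M A = G 1"
proof -
  have "{x\<in>A. f x < 1} = A" using assms unfolding has_cdf_on_def by auto
  moreover have "measure M {x\<in>A. f x < 1} = G 1" using assms unfolding has_cdf_on_def by simp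
  ultimately show ?thesis by simp
qed

lemma has_cdf_on_interval:
  assumes cdf: "has_cdf_on M A f G" and uv: "0 \<le> u" "u \<le> v" "v \<le> 1"
  shows "measure M {x\<in>A. u < f x \<and> f x < v} = G v - G u"
proof -
  have A: "A \<in> sets M" and [measurable]: "f \<in> borel_measurable M"
    and null: "measure M {x\<in>A. f x = u} = 0"
    and below: "measure M {x\<in>A. f x < u} = G u" "measure M {x\<in>A. f x < v} = G v"
    using cdf uv unfolding has_cdf_on_def by auto
  have sets: "{x\<in>A. f x < c} \<in> sets M" "{x\<in>A. f x = c} \<in> sets M"
    "{x\<in>A. c < f x \<and> f x < d} \<in> sets M" for c d
    by (intro sets_Collect_restrict[OF A]; measurable)+
  have "G v = measure M ({x\<in>A. f x < v} \<union> {x\<in>A. f x = u})"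
    using below null sets by (simp add: measure_zero_union)
  also have "{x\<in>A. f x < v} \<union> {x\<in>A. f x = u}
      = ({x\<in>A. f x < u} \<union> {x\<in>A. f x = u}) \<union> {x\<in>A. u < f x \<and> f x < v}"
    using uv by auto
  also have "measure M \<dots>
      = measure M ({x\<in>A. f x < u} \<union> {x\<in>A. f x = u}) + measure M {x\<in>A. u < f x \<and> f x < v}"
    using sets by (intro finite_measure_Union) auto
  also have "\<dots> = G u + measure M {x\<in>A. u < f x \<and> f x < v}"
    using below null sets by (simp add: measure_zero_union)
  finally show ?thesis by simp
qed

lemma has_cdf_on_null_finite:
  assumes cdf: "has_cdf_on M A f G" and "finite S"
  shows "measure M {x\<in>A. f x \<in> S} = 0"
proof -
  have A: "A \<in> sets M" and [measurable]: "f \<in> borel_measurable M"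
    and null: "\<And>v. measure M {x\<in>A. f x = v} = 0"
    using cdf unfolding has_cdf_on_def by auto
  have "{x\<in>A. f x \<in> S} = (\<Union>v\<in>S. {x\<in>A. f x = v})" by auto
  moreover have "measure M (\<Union>v\<in>S. {x\<in>A. f x = v}) \<le> (\<Sum>v\<in>S. measure M {x\<in>A. f x = v})"
    using \<open>finite S\<close>
    by (intro finite_measure_subadditive_finite) (auto intro: sets_Collect_restrict[OF A])
  ultimately show ?thesis using null by (simp add: measure_le_0_iff)
qed

lemma has_cdf_on_UN:
  assumes "finite J" "disjoint_family_on B J" "f \<in> borel_measurable M"
    and cdf: "\<And>j. j \<in> J \<Longrightarrow> has_cdf_on M (B j) f (G j)"
  shows "has_cdf_on M (\<Union>j\<in>J. B j) f (\<lambda>t. \<Sum>j\<in>J. G j t)"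
proof -
  have [measurable]: "f \<in> borel_measurable M" "\<And>j. j \<in> J \<Longrightarrow> B j \<in> sets M"
    using assms unfolding has_cdf_on_def by auto
  have measure_UN: "measure M {x\<in>\<Union>j\<in>J. B j. P (f x)} = (\<Sum>j\<in>J. measure M {x\<in>B j. P (f x)})"
    if "Measurable.pred borel P" for P
  proof -
    have "{x\<in>\<Union>j\<in>J. B j. P (f x)} = (\<Union>j\<in>J. {x\<in>B j. P (f x)})" by auto
    moreover have "disjoint_family_on (\<lambda>j. {x\<in>B j. P (f x)}) J"
      using assms(2) unfolding disjoint_family_on_def by auto
    moreover have "{x\<in>B j. P (f x)} \<in> sets M" if "j \<in> J" for j
      using that
      by (intro sets_Collect_restrict measurable_compose[OF _ \<open>Measurable.pred borel P\<close>]) measurable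
    ultimately show ?thesis
      using assms(1) by (simp add: finite_measure_finite_Union image_subset_iff)
  qed
  have "(\<Union>j\<in>J. B j) \<in> sets M" using assms(1) by auto
  moreover have "\<forall>x\<in>(\<Union>j\<in>J. B j). f x < 1" using cdf unfolding has_cdf_on_def by blast
  moreover have "measure M {x\<in>\<Union>j\<in>J. B j. f x = v} = 0" for v
    using measure_UN[of "\<lambda>y. y = v"] cdf by (simp add: has_cdf_on_def)
  moreover have "measure M {x\<in>\<Union>j\<in>J. B j. f x < v} = (\<Sum>j\<in>J. G j v)" if "v \<in> {0..1}" for v
    using measure_UN[of "\<lambda>y. y < v"] cdf that by (simp add: has_cdf_on_def)
  ultimately show ?thesis unfolding has_cdf_on_def using \<open>f \<in> borel_measurable M\<close> by blast
qed

end

text \<open>\<open>sed_cdf k t\<close> is \<open>2k\<close> times the Lebesgue measure of \<open>{y. 1/(2k+1) < y < 1/(2k-1) \<and> |2ky - 1| < t}\<close>.\<close>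

definition sed_cdf :: "nat \<Rightarrow> real \<Rightarrow> real" where
  "sed_cdf k t = min t (1 / (2 * real k - 1)) + min t (1 / (2 * real k + 1))"

lemma (in finite_measure) has_cdf_on_sed_T:
  assumes cdf: "has_cdf_on M A f G" and k: "k \<ge> 1"
    and affine: "\<And>y. 1 / (2 * real k + 1) \<le> y \<Longrightarrow> y \<le> 1 / (2 * real k - 1) \<Longrightarrow> G y = \<sigma> * y + \<tau>"
  shows "has_cdf_on M {x\<in>A. sed_d1 (f x) = 2 * k} (sed_T \<circ> f) (\<lambda>t. \<sigma> / (2 * real k) * sed_cdf k t)"
proof -
  let ?A' = "{x\<in>A. sed_d1 (f x) = 2 * k}"
  have A: "A \<in> sets M" and [measurable]: "f \<in> borel_measurable M"
    using cdf unfolding has_cdf_on_def by auto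
  have sets: "{x\<in>A. P (f x)} \<in> sets M" if "Measurable.pred borel P" for P
    using that by (intro sets_Collect_restrict[OF A] measurable_compose[OF _ that]) measurable
  have atomless: "measure M {x\<in>?A'. (sed_T \<circ> f) x = v} = 0" for v
  proof -
    let ?S = "{(1 - v) / (2 * real k), (1 + v) / (2 * real k)}"
    have "{x\<in>?A'. (sed_T \<circ> f) x = v} \<subseteq> {x\<in>A. f x \<in> ?S}"
      using sed_d1_sed_T_eq_imp[OF k] by fastforce
    then have "measure M {x\<in>?A'. (sed_T \<circ> f) x = v} \<le> measure M {x\<in>A. f x \<in> ?S}"
      by (rule finite_measure_mono) (intro sets; measurable)
    moreover have "measure M {x\<in>A. f x \<in> ?S} = 0"
      by (rule has_cdf_on_null_finite[OF cdf]) simp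
    ultimately show ?thesis by (simp add: measure_le_0_iff)
  qed
  have below: "measure M {x\<in>?A'. (sed_T \<circ> f) x < t} = \<sigma> / (2 * real k) * sed_cdf k t"
    if t: "t \<in> {0..1}" for t
  proof -
    define a where "a = (1 - min t (1 / (2 * real k + 1))) / (2 * real k)"
    define b where "b = (1 + min t (1 / (2 * real k - 1))) / (2 * real k)"
    have "{x\<in>?A'. (sed_T \<circ> f) x < t} = {x\<in>A. a < f x \<and> f x < b}"
      using sed_d1_sed_T_less_iff[OF k] unfolding a_def b_def by auto
    moreover have ab: "1 / (2 * real k + 1) \<le> a" "a \<le> b" "b \<le> 1 / (2 * real k - 1)"
      using abs_mult_sub_one_preimage_bounds[of "2 * real k" t] k t unfolding a_def b_def by auto
    moreover have "0 \<le> a" "b \<le> 1"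
    proof -
      have "0 < 1 / (2 * real k + 1)" "1 / (2 * real k - 1) \<le> 1" using k by simp_all
      with ab show "0 \<le> a" "b \<le> 1" by linarith+
    qed
    ultimately have "measure M {x\<in>?A'. (sed_T \<circ> f) x < t} = G b - G a"
      using has_cdf_on_interval[OF cdf, of a b] by simp
    also have "\<dots> = \<sigma> * (b - a)"
      using ab affine by (simp add: algebra_simps)
    also have "b - a = sed_cdf k t / (2 * real k)"
      unfolding a_def b_def sed_cdf_def by (simp add: diff_divide_distrib[symmetric])
    finally show ?thesis by simp
  qed
  have "?A' \<in> sets M" by (rule sets) measurable
  then show ?thesis unfolding has_cdf_on_def using sed_T_less_one atomless below by auto
qed

definition sed_cdf_slope :: "nat \<Rightarrow> nat \<Rightarrow> real" where
  "sed_cdf_slope a k = (if k < a then 0 else if k = a then 1 else 2)"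

lemma sed_cdf_affine_on_digit_interval:
  assumes a: "a \<ge> 1" and k: "k \<ge> 1"
  obtains \<tau> where "\<And>y. 1 / (2 * real k + 1) \<le> y \<Longrightarrow> y \<le> 1 / (2 * real k - 1) \<Longrightarrow>
    sed_cdf a y = sed_cdf_slope a k * y + \<tau>"
proof -
  have a_le: "1 / (2 * real a + 1) \<le> 1 / (2 * real a - 1)" using a by (intro frac_le) auto
  consider "k < a" | "k = a" | "a < k" by linarith
  then show ?thesis
  proof cases
    case 1
    then have "1 / (2 * real a - 1) \<le> 1 / (2 * real k + 1)" using k by (intro frac_le) auto
    then show ?thesis using 1 a_le that[of "1 / (2 * real a - 1) + 1 / (2 * real a + 1)"]
      unfolding sed_cdf_def sed_cdf_slope_def by (simp add: min_def)
  next
    case 2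
    then show ?thesis using that[of "1 / (2 * real a + 1)"]
      unfolding sed_cdf_def sed_cdf_slope_def by (simp add: min_def)
  next
    case 3
    then have "1 / (2 * real k - 1) \<le> 1 / (2 * real a + 1)" using a by (intro frac_le) auto
    then show ?thesis using 3 a_le that[of 0]
      unfolding sed_cdf_def sed_cdf_slope_def by (simp add: min_def)
  qed
qed

lemma (in finite_measure) has_cdf_on_sed_T_sed_cdf:
  assumes cdf: "has_cdf_on M A f (\<lambda>t. c * sed_cdf a t)" and a: "a \<ge> 1" and k: "k \<ge> 1"
  shows "has_cdf_on M {x\<in>A. sed_d1 (f x) = 2 * k} (sed_T \<circ> f)
    (\<lambda>t. c * sed_cdf_slope a k / (2 * real k) * sed_cdf k t)"
proof -
  obtain \<tau> where "\<And>y. 1 / (2 * real k + 1) \<le> y \<Longrightarrow> y \<le> 1 / (2 * real k - 1) \<Longrightarrow>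
      sed_cdf a y = sed_cdf_slope a k * y + \<tau>"
    using sed_cdf_affine_on_digit_interval[OF a k] by blast
  then have "\<And>y. 1 / (2 * real k + 1) \<le> y \<Longrightarrow> y \<le> 1 / (2 * real k - 1) \<Longrightarrow>
      c * sed_cdf a y = (c * sed_cdf_slope a k) * y + c * \<tau>"
    by (simp add: algebra_simps)
  from has_cdf_on_sed_T[OF cdf k this] show ?thesis by simp
qed

lemma sed_cdf_one: "k \<ge> 1 \<Longrightarrow> sed_cdf k 1 = 1 / (2 * real k - 1) + 1 / (2 * real k + 1)"
  unfolding sed_cdf_def by (simp add: min_def)

lemma (in finite_measure) has_cdf_on_transition_ratio:
  assumes cdf: "has_cdf_on M A f (\<lambda>t. c * sed_cdf a t)" and a: "a \<ge> 1" and l: "l \<ge> 1"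
    and pos: "measure M A > 0"
  shows "measure M {x\<in>A. sed_d1 (f x) = 2 * l} / measure M A = sed_trans a l"
proof -
  have "measure M {x\<in>A. sed_d1 (f x) = 2 * l} / measure M A
      = (c * sed_cdf_slope a l / (2 * real l) * sed_cdf l 1) / (c * sed_cdf a 1)"
    using has_cdf_on_measure[OF cdf] has_cdf_on_measure[OF has_cdf_on_sed_T_sed_cdf[OF cdf a l]]
    by simp
  also have "\<dots> = sed_trans a l"
  proof -
    define q where "q k = (2 * real k - 1) * (2 * real k + 1)" for k :: nat
    have q: "q k > 0" "sed_cdf k 1 = 4 * real k / q k" if "k \<ge> 1" for k
    proof -
      have pos: "0 < 2 * real k - 1" "0 < 2 * real k + 1" using that by simp_all
      then show "q k > 0" unfolding q_def by (rule mult_pos_pos)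
      show "sed_cdf k 1 = 4 * real k / q k"
        unfolding q_def using pos that by (simp add: sed_cdf_one field_simps)
    qed
    have "c \<noteq> 0" using pos has_cdf_on_measure[OF cdf] by auto
    consider "l < a" | "l = a" | "a < l" by linarith
    then show ?thesis
    proof cases
      case 1
      then show ?thesis by (simp add: sed_cdf_slope_def sed_trans_def)
    next
      case 2
      then show ?thesis using q[OF a] a \<open>c \<noteq> 0\<close> by (simp add: sed_cdf_slope_def sed_trans_def)
    next
      case 3
      then have "sed_trans a l = q a / (real a * q l)"
        by (simp add: sed_trans_def q_def mult.assoc)
      then show ?thesis using 3 q[OF a] q[OF l] a l \<open>c \<noteq> 0\<close> by (simp add: sed_cdf_slope_def)
    qed
  qed
  finally show ?thesis .
qed

interpretation sed_space: finite_measure sed_space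
  by (rule finite_measure_sed_space)

lemma has_cdf_on_sed_space_id: "has_cdf_on sed_space (space sed_space) (\<lambda>x. x) (\<lambda>t. t)"
proof -
  have "measure sed_space {x\<in>space sed_space. x = v} = 0" for v
  proof -
    have singleton: "{x\<in>space sed_space. x = v} = (if v \<in> {0<..<1} then {v} else {})" by auto
    show ?thesis unfolding singleton by (simp add: measure_sed_space)
  qed
  moreover have "measure sed_space {x\<in>space sed_space. x < v} = v" if "v \<in> {0..1}" for v
  proof -
    have "{x\<in>space sed_space. x < v} = {0<..<v}" using that by auto
    moreover have "measure sed_space {0<..<v} = measure lborel {0<..<v}"
      using that by (intro measure_sed_space) auto
    ultimately show ?thesis using that by simp
  qed
  ultimately show ?thesis
    unfolding has_cdf_on_def using sets.top[of sed_space] by (auto intro: measurable_sed_spaceI)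
qed

lemma has_cdf_on_first_digit:
  assumes "k \<ge> 1"
  shows "has_cdf_on sed_space {x\<in>space sed_space. sed_digit 1 x = 2 * k} (sed_T ^^ 1)
    (\<lambda>t. 1 / (2 * real k) * sed_cdf k t)"
  using sed_space.has_cdf_on_sed_T[OF has_cdf_on_sed_space_id assms, of 1 0]
  by (simp add: sed_digit_def comp_def)

lemma has_cdf_on_cylinder:
  assumes "n \<ge> 1" "\<forall>i\<in>{1..n}. a i \<ge> 1"
  shows "\<exists>c. has_cdf_on sed_space {x\<in>space sed_space. \<forall>i\<in>{1..n}. sed_digit i x = 2 * a i}
    (sed_T ^^ n) (\<lambda>t. c * sed_cdf (a n) t)"
  using assms
proof (induction n rule: nat_induct_at_least)
  case base
  have cylinder_1: "{x\<in>space sed_space. \<forall>i\<in>{1..1}. sed_digit i x = 2 * a i}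
      = {x\<in>space sed_space. sed_digit 1 x = 2 * a 1}"
    by simp
  have "a 1 \<ge> 1" using base by simp
  from has_cdf_on_first_digit[OF this] show ?case unfolding cylinder_1 by (rule exI)
next
  case (Suc n)
  have "\<forall>i\<in>{1..n}. a i \<ge> 1" using Suc.prems by auto
  then obtain c where c: "has_cdf_on sed_space
      {x\<in>space sed_space. \<forall>i\<in>{1..n}. sed_digit i x = 2 * a i} (sed_T ^^ n) (\<lambda>t. c * sed_cdf (a n) t)"
    using Suc.IH by blast
  have "a n \<ge> 1" "a (Suc n) \<ge> 1" using Suc by auto
  have cylinder_Suc: "{x\<in>space sed_space. \<forall>i\<in>{1..Suc n}. sed_digit i x = 2 * a i}
      = {x\<in>{x\<in>space sed_space. \<forall>i\<in>{1..n}. sed_digit i x = 2 * a i}.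
          sed_d1 ((sed_T ^^ n) x) = 2 * a (Suc n)}"
    by (auto simp: atLeastAtMostSuc_conv sed_digit_Suc)
  from sed_space.has_cdf_on_sed_T_sed_cdf[OF c \<open>a n \<ge> 1\<close> \<open>a (Suc n) \<ge> 1\<close>] show ?case
    unfolding cylinder_Suc funpow.simps(2) by (rule exI)
qed

lemma sed_digit_event_decompose:
  assumes "n \<ge> 1" "k \<ge> 1"
  shows "{x\<in>space sed_space. sed_digit (Suc n) x = 2 * k}
    = (\<Union>j\<in>{1..k}.
        {x\<in>{x\<in>space sed_space. sed_digit n x = 2 * j}. sed_d1 ((sed_T ^^ n) x) = 2 * k})"
proof -
  obtain m where n: "n = Suc m" using assms(1) by (cases n) auto
  have "sed_d1 ((sed_T ^^ n) x) = 2 * k \<Longrightarrow> \<exists>j\<in>{1..k}. sed_digit n x = 2 * j" for x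
    using sed_d1_sed_T_imp[OF assms(2)] by (simp add: n sed_digit_Suc)
  then show ?thesis by (auto simp: sed_digit_Suc)
qed

lemma has_cdf_on_digit_event:
  assumes "n \<ge> 1" "k \<ge> 1"
  shows "\<exists>c. has_cdf_on sed_space {x\<in>space sed_space. sed_digit n x = 2 * k}
    (sed_T ^^ n) (\<lambda>t. c * sed_cdf k t)"
  using assms
proof (induction n arbitrary: k rule: nat_induct_at_least)
  case base
  then show ?case using has_cdf_on_first_digit by blast
next
  case (Suc n)
  obtain c where c: "\<And>j. j \<ge> 1 \<Longrightarrow> has_cdf_on sed_space {x\<in>space sed_space. sed_digit n x = 2 * j}
      (sed_T ^^ n) (\<lambda>t. c j * sed_cdf j t)"
    using Suc.IH by metis
  define B where
    "B j = {x\<in>{x\<in>space sed_space. sed_digit n x = 2 * j}. sed_d1 ((sed_T ^^ n) x) = 2 * k}" for j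
  have "has_cdf_on sed_space (\<Union>j\<in>{1..k}. B j) (sed_T ^^ Suc n)
      (\<lambda>t. \<Sum>j\<in>{1..k}. c j * sed_cdf_slope j k / (2 * real k) * sed_cdf k t)"
  proof (rule sed_space.has_cdf_on_UN)
    show "disjoint_family_on B {1..k}"
      by (auto simp: disjoint_family_on_def B_def)
    show "sed_T ^^ Suc n \<in> borel_measurable sed_space"
      by (intro measurable_sed_spaceI) measurable
    show "has_cdf_on sed_space (B j) (sed_T ^^ Suc n)
        (\<lambda>t. c j * sed_cdf_slope j k / (2 * real k) * sed_cdf k t)" if "j \<in> {1..k}" for j
      using sed_space.has_cdf_on_sed_T_sed_cdf[OF c[of j]] that Suc.prems by (simp add: B_def)
  qed simp
  then show ?case
    unfolding B_def sed_digit_event_decompose[OF Suc.hyps Suc.prems] sum_distrib_right[symmetric]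
    by (rule exI)
qed

lemma sed_digit_transition_ratio:
  assumes cdf: "has_cdf_on sed_space A (sed_T ^^ n) (\<lambda>t. c * sed_cdf a t)"
    and "a \<ge> 1" "l \<ge> 1" "measure sed_space A > 0"
  shows "measure sed_space {x\<in>A. sed_digit (n + 1) x = 2 * l} / measure sed_space A = sed_trans a l"
  using sed_space.has_cdf_on_transition_ratio[OF assms] by (simp add: sed_digit_Suc)

lemma measure_first_digit:
  assumes k: "k \<ge> 1"
  shows "measure sed_space {x \<in> space sed_space. sed_digit 1 x = 2 * k}
    = 2 / ((2 * real k - 1) * (2 * real k + 1))"
  using sed_space.has_cdf_on_measure[OF has_cdf_on_first_digit[OF k]] sed_cdf_one[OF k] k
  by (simp add: field_simps)

lemma cylinder_transition_probability:
  assumes "n \<ge> 1" "\<forall>i\<in>{1..n}. a i \<ge> 1" "l \<ge> 1"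
    and pos: "measure sed_space {x \<in> space sed_space. \<forall>i\<in>{1..n}. sed_digit i x = 2 * a i} > 0"
  shows "measure sed_space {x \<in> space sed_space.
      (\<forall>i\<in>{1..n}. sed_digit i x = 2 * a i) \<and> sed_digit (n + 1) x = 2 * l}
    / measure sed_space {x \<in> space sed_space. \<forall>i\<in>{1..n}. sed_digit i x = 2 * a i}
    = sed_trans (a n) l"
proof -
  obtain c where "has_cdf_on sed_space {x \<in> space sed_space. \<forall>i\<in>{1..n}. sed_digit i x = 2 * a i}
      (sed_T ^^ n) (\<lambda>t. c * sed_cdf (a n) t)"
    using has_cdf_on_cylinder[OF assms(1,2)] by blast
  from sed_digit_transition_ratio[OF this _ \<open>l \<ge> 1\<close> pos] show ?thesis
    using assms(1,2) by auto
qed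

lemma digit_transition_probability:
  assumes "n \<ge> 1" "k \<ge> 1" "l \<ge> 1"
    and pos: "measure sed_space {x \<in> space sed_space. sed_digit n x = 2 * k} > 0"
  shows "measure sed_space
      {x \<in> space sed_space. sed_digit n x = 2 * k \<and> sed_digit (n + 1) x = 2 * l}
    / measure sed_space {x \<in> space sed_space. sed_digit n x = 2 * k} = sed_trans k l"
proof -
  obtain c where "has_cdf_on sed_space {x \<in> space sed_space. sed_digit n x = 2 * k}
      (sed_T ^^ n) (\<lambda>t. c * sed_cdf k t)"
    using has_cdf_on_digit_event[OF assms(1,2)] by blast
  from sed_digit_transition_ratio[OF this \<open>k \<ge> 1\<close> \<open>l \<ge> 1\<close> pos] show ?thesis
    by simp
qed

theorem proposition2p3:
  shows "(\<forall>n\<ge>1. sed_digit n \<in> sed_space \<rightarrow>\<^sub>M count_space UNIV)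
    \<and> (\<forall>k::nat\<ge>1. measure sed_space {x \<in> space sed_space. sed_digit 1 x = 2 * k}
                   = 2 / ((2 * real k - 1) * (2 * real k + 1)))
    \<and> (\<forall>n::nat\<ge>1. \<forall>a::nat \<Rightarrow> nat. \<forall>l::nat.
          (\<forall>i\<in>{1..n}. a i \<ge> 1) \<and> l \<ge> 1 \<and>
          measure sed_space {x \<in> space sed_space. \<forall>i\<in>{1..n}. sed_digit i x = 2 * a i} > 0
          \<longrightarrow> measure sed_space {x \<in> space sed_space.
                  (\<forall>i\<in>{1..n}. sed_digit i x = 2 * a i) \<and> sed_digit (n + 1) x = 2 * l}
              / measure sed_space {x \<in> space sed_space. \<forall>i\<in>{1..n}. sed_digit i x = 2 * a i}
              = sed_trans (a n) l)
    \<and> (\<forall>n::nat\<ge>1. \<forall>k::nat\<ge>1. \<forall>l::nat\<ge>1.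
          measure sed_space {x \<in> space sed_space. sed_digit n x = 2 * k} > 0
          \<longrightarrow> measure sed_space {x \<in> space sed_space.
                  sed_digit n x = 2 * k \<and> sed_digit (n + 1) x = 2 * l}
              / measure sed_space {x \<in> space sed_space. sed_digit n x = 2 * k}
              = sed_trans k l)"
  using sed_digit_measurable measure_first_digit cylinder_transition_probability
    digit_transition_probability
  by blast

end
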